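(* Let $(V,\mathcal H,\iota,W)$ be an abelian functional theory with set of weights $\Omega$, and let $\rho\in\mathrm{conv}(\Omega)$. If $\rho$ is pure-state $v$-representable and does not lie in the convex hull of any $\dim\mathrm{conv}(\Omega)$ weights, then $\rho$ is uniquely $v$-representable.
   Context: A generalized functional theory is a tuple $(V,\mathcal H,\iota,W)$ with $V$ a finite-dimensional real vector space, $\mathcal H$ a finite-dimensional complex Hilbert space, $\iota:V\to i\mathfrak u(\mathcal H)$ linear into the Hermitian operators, $W$ Hermitian; it is abelian if all $\iota(v)$ commute. States are linear functionals via the trace, $\iota^*$ is the dual map. A weight is $\alpha\in V^*$ such that some nonzero $\psi$ satisfies $\iota(v)\psi=\langle\alpha,v\rangle\psi$ for all $v$; $\Omega$ is the set of weights. $\mathbf G_p(v)$ is the set of pure ground states of $\iota(v)+W$. $\rho$ is pure-state $v$-representable if $\rho\in\iota^*(\mathbf G_p(v))$ for some $v$, and uniquely $v$-representable if moreover every $v'$ with $\rho\in\iota^*(\mathbf G_p(v'))$ satisfies $\iota(v')-\iota(v)\propto\mathbb 1$. *)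

theory Defs
  imports "HOL-Analysis.Analysis"
begin

text \<open>V is modelled as a Euclidean
space 'v; the dual space V* is identified with 'v via the inner product,
so a functional alpha acts as v \<mapsto> alpha \<bullet> v.\<close>

definition cinner :: "complex^'n \<Rightarrow> complex^'n \<Rightarrow> complex" where
  "cinner x y = (\<Sum>i\<in>UNIV. cnj (x$i) * y$i)"

definition hermitian :: "complex^'n^'n \<Rightarrow> bool" where
  "hermitian A \<longleftrightarrow> (\<forall>i j. A$i$j = cnj (A$j$i))"

definition functional_theory :: "('v::euclidean_space \<Rightarrow> complex^'n^'n) \<Rightarrow> complex^'n^'n \<Rightarrow> bool" where
  "functional_theory \<iota> W \<longleftrightarrow> linear \<iota> \<and> (\<forall>v. hermitian (\<iota> v)) \<and> hermitian W"

definition abelian :: "('v::euclidean_space \<Rightarrow> complex^'n^'n) \<Rightarrow> bool" where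
  "abelian \<iota> \<longleftrightarrow> (\<forall>u w. \<iota> u ** \<iota> w = \<iota> w ** \<iota> u)"

definition weights :: "('v::euclidean_space \<Rightarrow> complex^'n^'n) \<Rightarrow> 'v set" where
  "weights \<iota> = {\<alpha>. \<exists>\<psi>. \<psi> \<noteq> 0 \<and> (\<forall>v. \<iota> v *v \<psi> = complex_of_real (\<alpha> \<bullet> v) *s \<psi>)}"

definition pure_ground_states :: "complex^'n^'n \<Rightarrow> (complex^'n) set" where
  "pure_ground_states H = {\<psi>. cinner \<psi> \<psi> = 1 \<and>
     (\<exists>E::real. H *v \<psi> = complex_of_real E *s \<psi> \<and>
        (\<forall>\<phi> E'::complex. \<phi> \<noteq> 0 \<longrightarrow> H *v \<phi> = E' *s \<phi> \<longrightarrow> E \<le> Re E'))}"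

definition Gp :: "('v::euclidean_space \<Rightarrow> complex^'n^'n) \<Rightarrow> complex^'n^'n \<Rightarrow> 'v \<Rightarrow> (complex^'n) set" where
  "Gp \<iota> W v = pure_ground_states (\<iota> v + W)"

text \<open>Dual map iota^* applied to the pure state |psi><psi|: the functional
v \<mapsto> tr(|psi><psi| iota(v)) = <psi, iota(v) psi>, represented in 'v.\<close>
definition dual_pure :: "('v::euclidean_space \<Rightarrow> complex^'n^'n) \<Rightarrow> complex^'n \<Rightarrow> 'v \<Rightarrow> bool" where
  "dual_pure \<iota> \<psi> \<rho> \<longleftrightarrow> (\<forall>u. complex_of_real (\<rho> \<bullet> u) = cinner \<psi> (\<iota> u *v \<psi>))"

definition pure_v_rep_by :: "('v::euclidean_space \<Rightarrow> complex^'n^'n) \<Rightarrow> complex^'n^'n \<Rightarrow> 'v \<Rightarrow> 'v \<Rightarrow> bool" where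
  "pure_v_rep_by \<iota> W \<rho> v \<longleftrightarrow> (\<exists>\<psi>\<in>Gp \<iota> W v. dual_pure \<iota> \<psi> \<rho>)"

definition pure_v_representable :: "('v::euclidean_space \<Rightarrow> complex^'n^'n) \<Rightarrow> complex^'n^'n \<Rightarrow> 'v \<Rightarrow> bool" where
  "pure_v_representable \<iota> W \<rho> \<longleftrightarrow> (\<exists>v. pure_v_rep_by \<iota> W \<rho> v)"

definition uniquely_v_representable :: "('v::euclidean_space \<Rightarrow> complex^'n^'n) \<Rightarrow> complex^'n^'n \<Rightarrow> 'v \<Rightarrow> bool" where
  "uniquely_v_representable \<iota> W \<rho> \<longleftrightarrow> (\<exists>v. pure_v_rep_by \<iota> W \<rho> v \<and>
     (\<forall>v'. pure_v_rep_by \<iota> W \<rho> v' \<longrightarrow> (\<exists>c::complex. \<iota> v' - \<iota> v = mat c)))"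

end

theory Submission
  imports Defs
begin

text \<open>If \<rho> is represented by both v and v', the Hohenberg-Kohn variational argument makes
a ground state \<psi>' of \<iota> v' + W also a ground state of \<iota> v + W, hence an eigenvector of
\<iota> (v' - v), say for the eigenvalue c. As the \<iota> u commute and are Hermitian, \<psi>' splits
orthogonally into joint eigenvectors lying in that eigenspace, so \<rho> is a convex combination of
weights on the hyperplane \<alpha> \<bullet> (v' - v) = c. If \<iota> (v' - v) were not scalar, some weight would
lie off this hyperplane, so the weights on it span an affine space of smaller dimension than
\<Omega>, and Caratheodory's theorem would put \<rho> into the convex hull of aff_dim \<Omega> weights.\<close>

lemma quadratic_nonneg_imp_linear_coeff_zero:
  fixes a b :: real
  assumes "\<And>t. 0 \<le> b * t + a * t\<^sup>2"
  shows "b = 0"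
proof (rule ccontr)
  assume "b \<noteq> 0"
  define s where "s = \<bar>a\<bar> + 1"
  define t where "t = - b / s"
  have "s > 0"
    unfolding s_def by simp
  then have "s\<^sup>2 * (b * t + a * t\<^sup>2) = b\<^sup>2 * (a - s)"
    unfolding t_def by (simp add: field_simps power2_eq_square)
  also have "\<dots> < 0"
    using \<open>b \<noteq> 0\<close> unfolding s_def by (intro mult_pos_neg) auto
  finally show False
    using assms[of t] \<open>s > 0\<close> by (simp add: mult_less_0_iff)
qed

lemma dim_psubset_subspace:
  fixes S T :: "'a::euclidean_space set"
  assumes "subspace S" "subspace T" "S \<subset> T"
  shows "dim S < dim T"
proof (rule dim_psubset)
  show "span S \<subset> span T"
    using assms by (simp add: span_eq_iff[THEN iffD2])
qed

lemma convex_scaled_add_mem: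
  assumes "convex C" "x /\<^sub>R a \<in> C" "y /\<^sub>R b \<in> C" "0 < a" "0 < b"
  shows "(x + y) /\<^sub>R (a + b) \<in> C"
proof -
  have "(x + y) /\<^sub>R (a + b) = (a / (a + b)) *\<^sub>R (x /\<^sub>R a) + (b / (a + b)) *\<^sub>R (y /\<^sub>R b)"
    using assms(4,5) by (simp add: scaleR_add_right inverse_eq_divide)
  also have "\<dots> \<in> C"
    using assms by (intro convexD) (simp_all add: add_divide_distrib[symmetric])
  finally show ?thesis .
qed

lemma aff_dim_hyperplane_section_less:
  fixes \<Omega> :: "'a::euclidean_space set"
  assumes "\<beta> \<in> \<Omega>" "\<beta> \<bullet> w \<noteq> c"
  shows "aff_dim (\<Omega> \<inter> {\<alpha>. \<alpha> \<bullet> w = c}) < aff_dim \<Omega>"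
proof (rule aff_dim_psubset)
  have "affine {\<alpha>. \<alpha> \<bullet> w = c}"
    using affine_hyperplane[of w c] unfolding inner_commute[of w] .
  then have "affine hull (\<Omega> \<inter> {\<alpha>. \<alpha> \<bullet> w = c}) \<subseteq> {\<alpha>. \<alpha> \<bullet> w = c}"
    by (rule hull_minimal[OF Int_lower2])
  then have "\<beta> \<notin> affine hull (\<Omega> \<inter> {\<alpha>. \<alpha> \<bullet> w = c})"
    using assms(2) by blast
  moreover have "affine hull (\<Omega> \<inter> {\<alpha>. \<alpha> \<bullet> w = c}) \<subseteq> affine hull \<Omega>"
    by (simp add: hull_mono)
  moreover have "\<beta> \<in> affine hull \<Omega>"
    using assms(1) by (rule hull_inc)
  ultimately show "affine hull (\<Omega> \<inter> {\<alpha>. \<alpha> \<bullet> w = c}) \<subset> affine hull \<Omega>"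
    by blast
qed

lemma caratheodory_lower_aff_dim:
  fixes \<Omega> :: "'a::euclidean_space set"
  assumes "\<rho> \<in> convex hull \<Omega>0" "\<Omega>0 \<subseteq> \<Omega>" "aff_dim \<Omega>0 < aff_dim \<Omega>"
  shows "\<exists>S\<subseteq>\<Omega>. int (card S) = aff_dim \<Omega> \<and> \<rho> \<in> convex hull S"
proof -
  obtain T where "finite T" "T \<subseteq> \<Omega>0" and card_T: "int (card T) \<le> aff_dim \<Omega>0 + 1"
    and "\<rho> \<in> convex hull T"
    using assms(1) caratheodory_aff_dim[of \<Omega>0] by blast
  \<comment> \<open>Caratheodory in \<Omega>0 used at most aff_dim \<Omega> points; pad them with points of \<Omega>\<close>
  define d where "d = nat (aff_dim \<Omega>)"
  have d: "int d = aff_dim \<Omega>" "card T \<le> d"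
    using assms(3) card_T aff_dim_geq[of \<Omega>0] unfolding d_def by linarith+
  have "T \<subseteq> \<Omega>"
    using \<open>T \<subseteq> \<Omega>0\<close> assms(2) by blast
  obtain C where "finite C" "T \<subseteq> C" "C \<subseteq> \<Omega>" "d \<le> card C"
  proof (cases "finite \<Omega>")
    case True
    have "d \<le> card \<Omega>"
      using aff_dim_le_card[OF True] d(1) by linarith
    then show thesis
      using that[of \<Omega>] True \<open>T \<subseteq> \<Omega>\<close> by blast
  next
    case False
    then obtain B where "finite B" "card B = d" "B \<subseteq> \<Omega>"
      using infinite_arbitrarily_large by blast
    then show thesis
      using that[of "T \<union> B"] \<open>finite T\<close> \<open>T \<subseteq> \<Omega>\<close> card_mono[of "T \<union> B" B] by auto
  qed
  then obtain S where "T \<subseteq> S" "S \<subseteq> C" "card S = d"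
    using exists_subset_between[of T d C] d(2) by blast
  moreover from \<open>T \<subseteq> S\<close> have "\<rho> \<in> convex hull S"
    using \<open>\<rho> \<in> convex hull T\<close> hull_mono by blast
  ultimately show ?thesis
    using \<open>C \<subseteq> \<Omega>\<close> d(1) by (intro exI[of _ S]) auto
qed

lemma orthogonal_decomp_within:
  fixes K K1 :: "'a::euclidean_space set"
  assumes "subspace K" "subspace K1" "K1 \<subseteq> K" "\<phi> \<in> K"
  obtains p q where "p \<in> K1" "q \<in> K \<inter> K1\<^sup>\<bottom>" "\<phi> = p + q"
proof -
  obtain p q where "p \<in> K1" "q \<in> K1\<^sup>\<bottom>" and \<phi>_eq: "\<phi> = p + q"
    using subspace_sum_orthogonal_comp[OF assms(2)] set_plus_elim by (metis UNIV_I)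
  moreover have "q \<in> K"
    using subspace_diff[OF assms(1,4), of p] \<open>p \<in> K1\<close> assms(3) unfolding \<phi>_eq by auto
  ultimately show thesis
    using that by blast
qed

lemma Re_cinner: "Re (cinner x y) = x \<bullet> y"
  unfolding cinner_def inner_vec_def inner_complex_def by (simp add: Re_sum)

lemma hermitian_cinner_mult:
  assumes "hermitian A"
  shows "cinner x (A *v y) = cinner (A *v x) y"
proof -
  have cnj_A: "cnj (A$j$i) = A$i$j" for i j
    using assms unfolding hermitian_def by (metis complex_cnj_cnj)
  have "cinner x (A *v y) = (\<Sum>i\<in>UNIV. \<Sum>j\<in>UNIV. cnj (x$i) * (A$i$j * y$j))"
    unfolding cinner_def matrix_vector_mult_def by (simp add: sum_distrib_left)
  also have "\<dots> = (\<Sum>j\<in>UNIV. \<Sum>i\<in>UNIV. cnj (A$j$i * x$i) * y$j)"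
    by (subst sum.swap) (simp add: cnj_A mult_ac)
  also have "\<dots> = cinner (A *v x) y"
    unfolding cinner_def matrix_vector_mult_def by (simp add: sum_distrib_right)
  finally show ?thesis .
qed

lemma hermitian_inner_mult:
  "hermitian A \<Longrightarrow> x \<bullet> (A *v y) = (A *v x) \<bullet> y"
  by (metis hermitian_cinner_mult Re_cinner)

lemma hermitian_add: "hermitian A \<Longrightarrow> hermitian B \<Longrightarrow> hermitian (A + B)"
  unfolding hermitian_def by (metis complex_cnj_add vector_add_component)

lemma complex_matrix_vector_mult_scaleR: "(A::complex^'n^'m) *v (t *\<^sub>R x) = t *\<^sub>R (A *v x)"
  using linear_scale[OF matrix_vector_mul_linear] by blast

lemma scaleR_complex_matrix_vector_mult: "(t *\<^sub>R (A::complex^'n^'m)) *v x = t *\<^sub>R (A *v x)"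
  by (simp add: vec_eq_iff matrix_vector_mult_def scaleR_sum_right)

lemma of_real_vector_mult_eq_scaleR: "complex_of_real t *s (x::complex^'n) = t *\<^sub>R x"
  unfolding vec_eq_iff vector_scaleR_component vector_smult_component by (simp add: scaleR_conv_of_real)

lemma matrix_vector_mult_mat: "mat c *v (x::complex^'n) = c *s x"
  by (simp add: vec_eq_iff matrix_vector_mult_def mat_def if_distrib if_distribR cong: if_cong)

lemma subspace_eigenspace: "subspace {x. (A::complex^'n^'n) *v x = c *\<^sub>R x}"
  unfolding subspace_def
  by (simp add: matrix_vector_right_distrib complex_matrix_vector_mult_scaleR scaleR_add_right)

lemma hermitian_invariant_orthogonal_comp:
  fixes A :: "complex^'n^'n"
  assumes "hermitian A" "\<forall>x\<in>K. A *v x \<in> K" "x \<in> K\<^sup>\<bottom>"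
  shows "A *v x \<in> K\<^sup>\<bottom>"
  unfolding orthogonal_comp_def orthogonal_def
proof (intro CollectI ballI)
  fix y assume "y \<in> K"
  have "y \<bullet> (A *v x) = (A *v y) \<bullet> x"
    by (rule hermitian_inner_mult[OF assms(1)])
  also have "\<dots> = 0"
    using assms(2,3) \<open>y \<in> K\<close> unfolding orthogonal_comp_def orthogonal_def by blast
  finally show "y \<bullet> (A *v x) = 0" .
qed

lemma quadratic_form_orthogonal_add:
  fixes A :: "complex^'n^'n"
  assumes "hermitian A" "\<forall>x\<in>K. A *v x \<in> K" "p \<in> K" "q \<in> K\<^sup>\<bottom>"
  shows "(p + q) \<bullet> (A *v (p + q)) = p \<bullet> (A *v p) + q \<bullet> (A *v q)"
proof -
  have "(A *v p) \<bullet> q = 0"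
    using assms(2-4) unfolding orthogonal_comp_def orthogonal_def by blast
  then have "q \<bullet> (A *v p) = 0"
    by (simp add: inner_commute)
  moreover have "p \<bullet> (A *v q) = 0"
    using calculation hermitian_inner_mult[OF assms(1), of p q] by (simp add: inner_commute)
  ultimately show ?thesis
    by (simp add: matrix_vector_right_distrib inner_add_left inner_add_right)
qed

lemma rayleigh_minimizer_is_eigenvector:
  fixes A :: "complex^'n^'n"
  assumes herm: "hermitian A" and K: "subspace K" "\<forall>x\<in>K. A *v x \<in> K"
    and lower: "\<forall>x\<in>K. E * (x \<bullet> x) \<le> x \<bullet> (A *v x)"
    and "\<phi> \<in> K" and attained: "\<phi> \<bullet> (A *v \<phi>) = E * (\<phi> \<bullet> \<phi>)"
  shows "A *v \<phi> = E *\<^sub>R \<phi>"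
proof -
  define Q where "Q x = x \<bullet> (A *v x) - E * (x \<bullet> x)" for x
  define h where "h = A *v \<phi> - E *\<^sub>R \<phi>"
  have "h \<in> K"
    using K \<open>\<phi> \<in> K\<close> unfolding h_def by (simp add: subspace_diff subspace_scale)
  have sym: "\<phi> \<bullet> (A *v h) = h \<bullet> (A *v \<phi>)"
    by (metis hermitian_inner_mult[OF herm] inner_commute)
  have hh: "h \<bullet> (A *v \<phi>) = h \<bullet> h + E * (h \<bullet> \<phi>)"
    by (simp add: h_def inner_diff_right)
  have "Q (\<phi> + t *\<^sub>R h) = Q \<phi> + t * (\<phi> \<bullet> (A *v h) + h \<bullet> (A *v \<phi>) - 2 * E * (h \<bullet> \<phi>)) + Q h * t\<^sup>2"
    for t
    by (simp add: Q_def matrix_vector_right_distrib complex_matrix_vector_mult_scaleR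
        inner_add_left inner_add_right inner_commute[of \<phi> h] algebra_simps power2_eq_square)
  moreover have "Q \<phi> = 0"
    using attained unfolding Q_def by simp
  \<comment> \<open>Q is nonnegative on K and vanishes at \<phi>, so its linear term along h must vanish\<close>
  ultimately have "Q (\<phi> + t *\<^sub>R h) = 2 * (h \<bullet> h) * t + Q h * t\<^sup>2" for t
    by (simp add: sym hh algebra_simps)
  moreover have "0 \<le> Q (\<phi> + t *\<^sub>R h)" for t
    using lower K \<open>\<phi> \<in> K\<close> \<open>h \<in> K\<close> unfolding Q_def by (simp add: subspace_add subspace_scale)
  ultimately have "2 * (h \<bullet> h) = 0"
    by (intro quadratic_nonneg_imp_linear_coeff_zero[of "2 * (h \<bullet> h)" "Q h"]) metis
  then show ?thesis
    by (simp add: h_def)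
qed

lemma hermitian_min_eigenvector:
  fixes A :: "complex^'n^'n"
  assumes herm: "hermitian A" and K: "subspace K" "\<forall>x\<in>K. A *v x \<in> K" "K \<noteq> {0}"
  obtains \<phi> m where "\<phi> \<in> K" "\<phi> \<noteq> 0" "A *v \<phi> = m *\<^sub>R \<phi>"
    "\<forall>x\<in>K. m * (x \<bullet> x) \<le> x \<bullet> (A *v x)"
proof -
  define S where "S = K \<inter> sphere 0 1"
  have "compact S"
    unfolding S_def by (intro closed_Int_compact closed_subspace K compact_sphere)
  obtain x0 where "x0 \<in> K" "x0 \<noteq> 0"
    using K subspace_0 by blast
  then have "x0 /\<^sub>R norm x0 \<in> S"
    using K unfolding S_def by (simp add: subspace_scale)
  moreover have "continuous_on S (\<lambda>x. x \<bullet> (A *v x))"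
    by (intro continuous_intros linear_continuous_on) simp
  ultimately obtain \<phi> where "\<phi> \<in> S" and min: "\<forall>y\<in>S. \<phi> \<bullet> (A *v \<phi>) \<le> y \<bullet> (A *v y)"
    using continuous_attains_inf[OF \<open>compact S\<close>] by blast
  define m where "m = \<phi> \<bullet> (A *v \<phi>)"
  have lower: "\<forall>x\<in>K. m * (x \<bullet> x) \<le> x \<bullet> (A *v x)"
  proof
    fix x assume "x \<in> K"
    show "m * (x \<bullet> x) \<le> x \<bullet> (A *v x)"
    proof (cases "x = 0")
      case False
      then have "x /\<^sub>R norm x \<in> S"
        using K \<open>x \<in> K\<close> unfolding S_def by (simp add: subspace_scale)
      then have "m \<le> (x /\<^sub>R norm x) \<bullet> (A *v (x /\<^sub>R norm x))"
        using min unfolding m_def by blast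
      also have "\<dots> = (x \<bullet> (A *v x)) / (norm x)\<^sup>2"
        using False by (simp add: complex_matrix_vector_mult_scaleR power2_eq_square field_simps)
      finally have "m * (norm x)\<^sup>2 \<le> x \<bullet> (A *v x)"
        using False by (simp add: pos_le_divide_eq)
      then show ?thesis
        by (simp add: power2_norm_eq_inner)
    qed simp
  qed
  have "\<phi> \<in> K" "\<phi> \<bullet> \<phi> = 1"
    using \<open>\<phi> \<in> S\<close> unfolding S_def by (auto simp: norm_eq_1)
  moreover from this have "A *v \<phi> = m *\<^sub>R \<phi>"
    by (intro rayleigh_minimizer_is_eigenvector[OF herm K(1,2) lower]) (simp_all add: m_def)
  ultimately show thesis
    using that lower by fastforce
qed

lemma pure_ground_state_normalized:
  assumes "\<psi> \<in> pure_ground_states A"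
  shows "\<psi> \<bullet> \<psi> = 1"
proof -
  have "cinner \<psi> \<psi> = 1"
    using assms unfolding pure_ground_states_def by blast
  then show ?thesis
    by (metis Re_cinner one_complex.sel(1))
qed

lemma pure_ground_state_energy:
  fixes A :: "complex^'n^'n"
  assumes herm: "hermitian A" and "\<psi> \<in> pure_ground_states A"
  obtains E where "A *v \<psi> = E *\<^sub>R \<psi>" "\<forall>x. E * (x \<bullet> x) \<le> x \<bullet> (A *v x)"
proof -
  obtain E where ev: "A *v \<psi> = complex_of_real E *s \<psi>"
    and below: "\<forall>\<phi> E'::complex. \<phi> \<noteq> 0 \<longrightarrow> A *v \<phi> = E' *s \<phi> \<longrightarrow> E \<le> Re E'"
    using assms(2) unfolding pure_ground_states_def by blast
  have "\<psi> \<bullet> \<psi> = 1"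
    using assms(2) by (rule pure_ground_state_normalized)
  then have "(UNIV :: (complex^'n) set) \<noteq> {0}"
    by auto
  obtain \<phi> m where "\<phi> \<in> UNIV" "\<phi> \<noteq> 0" and eigen: "A *v \<phi> = m *\<^sub>R \<phi>"
    and lower: "\<forall>x\<in>UNIV. m * (x \<bullet> x) \<le> x \<bullet> (A *v x)"
    by (rule hermitian_min_eigenvector[OF herm subspace_UNIV _ \<open>UNIV \<noteq> {0}\<close>]) simp_all
  have "A *v \<phi> = complex_of_real m *s \<phi>"
    using eigen by (simp add: of_real_vector_mult_eq_scaleR)
  from below[rule_format, OF \<open>\<phi> \<noteq> 0\<close> this] have "E \<le> m"
    by simp
  then have "\<forall>x. E * (x \<bullet> x) \<le> x \<bullet> (A *v x)"
    using lower by (meson UNIV_I inner_ge_zero mult_right_mono order_trans)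
  moreover have "A *v \<psi> = E *\<^sub>R \<psi>"
    using ev by (simp add: of_real_vector_mult_eq_scaleR)
  ultimately show thesis
    using that by blast
qed

text \<open>Hohenberg-Kohn: adding the two variational inequalities shows that \<psi>' also attains the
ground energy of H.\<close>

lemma common_ground_state_eigenvector:
  fixes H H' :: "complex^'n^'n"
  assumes herm: "hermitian H" "hermitian H'"
    and ground: "\<psi> \<in> pure_ground_states H" "\<psi>' \<in> pure_ground_states H'"
    and same_expectation: "\<psi> \<bullet> ((H' - H) *v \<psi>) = \<psi>' \<bullet> ((H' - H) *v \<psi>')"
  shows "\<exists>c. (H' - H) *v \<psi>' = c *\<^sub>R \<psi>'"
proof -
  obtain E where ev: "H *v \<psi> = E *\<^sub>R \<psi>" and lower: "\<forall>x. E * (x \<bullet> x) \<le> x \<bullet> (H *v x)"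
    using pure_ground_state_energy[OF herm(1) ground(1)] by blast
  obtain E' where ev': "H' *v \<psi>' = E' *\<^sub>R \<psi>'" and lower': "\<forall>x. E' * (x \<bullet> x) \<le> x \<bullet> (H' *v x)"
    using pure_ground_state_energy[OF herm(2) ground(2)] by blast
  have norm: "\<psi> \<bullet> \<psi> = 1" "\<psi>' \<bullet> \<psi>' = 1"
    using ground by (simp_all add: pure_ground_state_normalized)
  have "E' \<le> \<psi> \<bullet> (H' *v \<psi>)"
    using lower'[rule_format, of \<psi>] norm(1) by simp
  also have "\<dots> = E + \<psi> \<bullet> ((H' - H) *v \<psi>)"
    using ev norm(1) by (simp add: matrix_vector_mult_diff_rdistrib inner_diff_right)
  finally have "E' \<le> E + \<psi>' \<bullet> ((H' - H) *v \<psi>')"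
    using same_expectation by simp
  moreover have "\<psi>' \<bullet> (H *v \<psi>') = E' - \<psi>' \<bullet> ((H' - H) *v \<psi>')"
    using ev' norm(2) by (simp add: matrix_vector_mult_diff_rdistrib inner_diff_right)
  moreover have "E \<le> \<psi>' \<bullet> (H *v \<psi>')"
    using lower[rule_format, of \<psi>'] norm(2) by simp
  ultimately have "\<psi>' \<bullet> (H *v \<psi>') = E * (\<psi>' \<bullet> \<psi>')"
    using norm(2) by simp
  then have "H *v \<psi>' = E *\<^sub>R \<psi>'"
    using rayleigh_minimizer_is_eigenvector[OF herm(1) subspace_UNIV] lower by blast
  then have "(H' - H) *v \<psi>' = (E' - E) *\<^sub>R \<psi>'"
    using ev' by (simp add: matrix_vector_mult_diff_rdistrib scaleR_diff_left)
  then show ?thesis ..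
qed

text \<open>The functional u \<mapsto> \<phi> \<bullet> (\<iota> u *v \<phi>), i.e. the dual map of \<iota> applied to the unnormalised pure
state of \<phi>, represented in 'v as in \<^const>\<open>dual_pure\<close>.\<close>

definition expectation :: "('v::euclidean_space \<Rightarrow> complex^'n^'n) \<Rightarrow> complex^'n \<Rightarrow> 'v" where
  "expectation \<iota> \<phi> = (\<Sum>b\<in>Basis. (\<phi> \<bullet> (\<iota> b *v \<phi>)) *\<^sub>R b)"

lemma inner_expectation:
  assumes "linear \<iota>"
  shows "expectation \<iota> \<phi> \<bullet> u = \<phi> \<bullet> (\<iota> u *v \<phi>)"
proof -
  have lin: "linear (\<lambda>u. \<phi> \<bullet> (\<iota> u *v \<phi>))"
  proof (rule linearI)
    show "\<phi> \<bullet> (\<iota> (x + y) *v \<phi>) = \<phi> \<bullet> (\<iota> x *v \<phi>) + \<phi> \<bullet> (\<iota> y *v \<phi>)" for x y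
      by (simp add: linear_add[OF assms] matrix_vector_mult_add_rdistrib inner_add_right)
    show "\<phi> \<bullet> (\<iota> (c *\<^sub>R x) *v \<phi>) = c *\<^sub>R (\<phi> \<bullet> (\<iota> x *v \<phi>))" for c x
      by (simp add: linear_scale[OF assms] scaleR_complex_matrix_vector_mult)
  qed
  have "\<phi> \<bullet> (\<iota> u *v \<phi>) = \<phi> \<bullet> (\<iota> (\<Sum>b\<in>Basis. (u \<bullet> b) *\<^sub>R b) *v \<phi>)"
    by (simp add: euclidean_representation)
  also have "\<dots> = (\<Sum>b\<in>Basis. (u \<bullet> b) * (\<phi> \<bullet> (\<iota> b *v \<phi>)))"
    using linear_sum[OF lin, of "\<lambda>b. (u \<bullet> b) *\<^sub>R b" Basis] linear_scale[OF lin] by simp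
  also have "\<dots> = expectation \<iota> \<phi> \<bullet> u"
    unfolding expectation_def inner_sum_left by (simp add: inner_commute mult.commute)
  finally show ?thesis
    by simp
qed

lemma dual_pure_eq_expectation:
  assumes "linear \<iota>" "dual_pure \<iota> \<psi> \<rho>"
  shows "\<rho> = expectation \<iota> \<psi>"
proof (rule euclidean_eqI)
  fix b :: 'a
  have "complex_of_real (\<rho> \<bullet> b) = cinner \<psi> (\<iota> b *v \<psi>)"
    using assms(2) unfolding dual_pure_def by blast
  then have "\<rho> \<bullet> b = Re (cinner \<psi> (\<iota> b *v \<psi>))"
    by (metis Re_complex_of_real)
  then show "\<rho> \<bullet> b = expectation \<iota> \<psi> \<bullet> b"
    by (simp add: Re_cinner inner_expectation[OF assms(1)])
qed

lemma expectation_orthogonal_add: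
  assumes "\<forall>u. hermitian (\<iota> u)" "\<forall>u. \<forall>x\<in>K. \<iota> u *v x \<in> K" "p \<in> K" "q \<in> K\<^sup>\<bottom>"
  shows "expectation \<iota> (p + q) = expectation \<iota> p + expectation \<iota> q"
proof -
  have "(p + q) \<bullet> (\<iota> b *v (p + q)) = p \<bullet> (\<iota> b *v p) + q \<bullet> (\<iota> b *v q)" for b
    using quadratic_form_orthogonal_add assms by blast
  then show ?thesis
    by (simp add: expectation_def scaleR_add_left sum.distrib)
qed

lemma joint_eigenvector_expectation:
  assumes "linear \<iota>" "\<phi> \<noteq> 0" "\<forall>u. \<exists>m::real. \<iota> u *v \<phi> = m *\<^sub>R \<phi>"
  shows "\<iota> u *v \<phi> = ((expectation \<iota> \<phi> /\<^sub>R (\<phi> \<bullet> \<phi>)) \<bullet> u) *\<^sub>R \<phi>"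
proof -
  obtain m where m: "\<iota> u *v \<phi> = m *\<^sub>R \<phi>"
    using assms(3) by blast
  then have "expectation \<iota> \<phi> \<bullet> u = m * (\<phi> \<bullet> \<phi>)"
    by (simp add: inner_expectation[OF assms(1)])
  then show ?thesis
    using m assms(2) by simp
qed

definition weights_in :: "('v::euclidean_space \<Rightarrow> complex^'n^'n) \<Rightarrow> (complex^'n) set \<Rightarrow> 'v set" where
  "weights_in \<iota> K = {\<alpha>. \<exists>\<phi>\<in>K. \<phi> \<noteq> 0 \<and> (\<forall>u. \<iota> u *v \<phi> = complex_of_real (\<alpha> \<bullet> u) *s \<phi>)}"

lemma weights_in_mono: "K \<subseteq> K' \<Longrightarrow> weights_in \<iota> K \<subseteq> weights_in \<iota> K'"
  unfolding weights_in_def by blast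

lemma weights_in_subset_weights: "weights_in \<iota> K \<subseteq> weights \<iota>"
  unfolding weights_in_def weights_def by blast

lemma abelian_eigenspace_invariant:
  assumes "abelian \<iota>" "\<iota> w *v x = c *\<^sub>R x"
  shows "\<iota> w *v (\<iota> u *v x) = c *\<^sub>R (\<iota> u *v x)"
proof -
  have "\<iota> w *v (\<iota> u *v x) = \<iota> u *v (\<iota> w *v x)"
    using assms(1) unfolding abelian_def by (simp add: matrix_vector_mul_assoc)
  also have "\<dots> = c *\<^sub>R (\<iota> u *v x)"
    using assms(2) by (simp add: complex_matrix_vector_mult_scaleR)
  finally show ?thesis .
qed

lemma invariant_subspace_split:
  fixes \<iota> :: "'v::euclidean_space \<Rightarrow> complex^'n^'n"
  assumes herm: "\<forall>u. hermitian (\<iota> u)" and ab: "abelian \<iota>"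
    and K: "subspace K" "\<forall>u. \<forall>x\<in>K. \<iota> u *v x \<in> K"
    and "\<phi> \<in> K" and not_eigen: "\<forall>m::real. \<iota> u *v \<phi> \<noteq> m *\<^sub>R \<phi>"
  obtains K1 where "K1 \<subseteq> K" "subspace K1" "\<forall>u. \<forall>x\<in>K1. \<iota> u *v x \<in> K1" "dim K1 < dim K"
    "subspace (K \<inter> K1\<^sup>\<bottom>)" "\<forall>u. \<forall>x\<in>K \<inter> K1\<^sup>\<bottom>. \<iota> u *v x \<in> K \<inter> K1\<^sup>\<bottom>"
    "dim (K \<inter> K1\<^sup>\<bottom>) < dim K"
proof -
  have "K \<noteq> {0}"
    using \<open>\<phi> \<in> K\<close> not_eigen[rule_format, of 0] by auto
  then obtain \<phi>0 m where "\<phi>0 \<in> K" "\<phi>0 \<noteq> 0" "\<iota> u *v \<phi>0 = m *\<^sub>R \<phi>0"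
    using hermitian_min_eigenvector[of "\<iota> u" K] herm K by metis
  define K1 where "K1 = K \<inter> {x. \<iota> u *v x = m *\<^sub>R x}"
  have sub1: "subspace K1" and sub2: "subspace (K \<inter> K1\<^sup>\<bottom>)"
    unfolding K1_def by (simp_all add: subspace_inter K subspace_eigenspace subspace_orthogonal_comp)
  have inv1: "\<forall>u'. \<forall>x\<in>K1. \<iota> u' *v x \<in> K1"
    using K abelian_eigenspace_invariant[OF ab] unfolding K1_def by blast
  have inv2: "\<forall>u'. \<forall>x\<in>K \<inter> K1\<^sup>\<bottom>. \<iota> u' *v x \<in> K \<inter> K1\<^sup>\<bottom>"
    using K inv1 hermitian_invariant_orthogonal_comp herm by blast
  have "\<phi> \<notin> K1"
    using not_eigen unfolding K1_def by blast
  then have dim1: "dim K1 < dim K"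
    using \<open>\<phi> \<in> K\<close> sub1 K unfolding K1_def by (intro dim_psubset_subspace) auto
  have "\<phi>0 \<in> K1"
    unfolding K1_def using \<open>\<phi>0 \<in> K\<close> \<open>\<iota> u *v \<phi>0 = m *\<^sub>R \<phi>0\<close> by blast
  then have "\<phi>0 \<notin> K \<inter> K1\<^sup>\<bottom>"
    using \<open>\<phi>0 \<noteq> 0\<close> orthogonal_Int_0[OF sub1] by blast
  then have dim2: "dim (K \<inter> K1\<^sup>\<bottom>) < dim K"
    using \<open>\<phi>0 \<in> K\<close> sub2 K by (intro dim_psubset_subspace) auto
  have "K1 \<subseteq> K"
    unfolding K1_def by blast
  then show thesis
    using that sub1 inv1 dim1 sub2 inv2 dim2 by blast
qed

lemma expectation_in_convex_hull_weights_in: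
  fixes \<iota> :: "'v::euclidean_space \<Rightarrow> complex^'n^'n"
  assumes lin: "linear \<iota>" and herm: "\<forall>u. hermitian (\<iota> u)" and ab: "abelian \<iota>"
  shows "subspace K \<Longrightarrow> \<forall>u. \<forall>x\<in>K. \<iota> u *v x \<in> K \<Longrightarrow> \<phi> \<in> K \<Longrightarrow> \<phi> \<noteq> 0 \<Longrightarrow>
    expectation \<iota> \<phi> /\<^sub>R (\<phi> \<bullet> \<phi>) \<in> convex hull (weights_in \<iota> K)"
proof (induction "dim K" arbitrary: K \<phi> rule: less_induct)
  case less
  note K = less.prems(1,2) and \<phi> = less.prems(3,4)
  show ?case
  proof (cases "\<forall>u. \<exists>m::real. \<iota> u *v \<phi> = m *\<^sub>R \<phi>")
    case True
    then have "expectation \<iota> \<phi> /\<^sub>R (\<phi> \<bullet> \<phi>) \<in> weights_in \<iota> K"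
      using joint_eigenvector_expectation[OF lin \<phi>(2)] \<phi> unfolding weights_in_def
      by (auto simp: of_real_vector_mult_eq_scaleR)
    then show ?thesis
      by (rule hull_inc)
  next
    case False
    then obtain u where "\<forall>m::real. \<iota> u *v \<phi> \<noteq> m *\<^sub>R \<phi>"
      by blast
    then obtain K1 where "K1 \<subseteq> K" and K1: "subspace K1" "\<forall>u. \<forall>x\<in>K1. \<iota> u *v x \<in> K1" "dim K1 < dim K"
      and K2: "subspace (K \<inter> K1\<^sup>\<bottom>)" "\<forall>u. \<forall>x\<in>K \<inter> K1\<^sup>\<bottom>. \<iota> u *v x \<in> K \<inter> K1\<^sup>\<bottom>"
        "dim (K \<inter> K1\<^sup>\<bottom>) < dim K"
      using invariant_subspace_split[OF herm ab K \<phi>(1)] by blast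
    obtain p q where "p \<in> K1" "q \<in> K \<inter> K1\<^sup>\<bottom>" and \<phi>_eq: "\<phi> = p + q"
      using orthogonal_decomp_within[OF K(1) K1(1) \<open>K1 \<subseteq> K\<close> \<phi>(1)] by blast
    have split: "expectation \<iota> \<phi> = expectation \<iota> p + expectation \<iota> q"
      unfolding \<phi>_eq using expectation_orthogonal_add herm K1(2) \<open>p \<in> K1\<close> \<open>q \<in> K \<inter> K1\<^sup>\<bottom>\<close> by blast
    have "p \<bullet> q = 0"
      using \<open>p \<in> K1\<close> \<open>q \<in> K \<inter> K1\<^sup>\<bottom>\<close> unfolding orthogonal_comp_def orthogonal_def by blast
    then have norm_split: "\<phi> \<bullet> \<phi> = p \<bullet> p + q \<bullet> q"
      unfolding \<phi>_eq by (simp add: inner_add_left inner_add_right inner_commute)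
    have IH1: "p \<noteq> 0 \<Longrightarrow> expectation \<iota> p /\<^sub>R (p \<bullet> p) \<in> convex hull (weights_in \<iota> K)"
      using less.hyps[OF K1(3,1,2) \<open>p \<in> K1\<close>] hull_mono[OF weights_in_mono[OF \<open>K1 \<subseteq> K\<close>]]
      by blast
    have IH2: "q \<noteq> 0 \<Longrightarrow> expectation \<iota> q /\<^sub>R (q \<bullet> q) \<in> convex hull (weights_in \<iota> K)"
      using less.hyps[OF K2(3,1,2) \<open>q \<in> K \<inter> K1\<^sup>\<bottom>\<close>] hull_mono[OF weights_in_mono[OF Int_lower1]]
      by blast
    show ?thesis
    proof (cases "p = 0 \<or> q = 0")
      case True
      then show ?thesis
        using IH1 IH2 \<phi>(2) unfolding \<phi>_eq by auto
    next
      case False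
      then show ?thesis
        unfolding split norm_split
        by (intro convex_scaled_add_mem[OF convex_convex_hull IH1 IH2]) simp_all
    qed
  qed
qed

lemma weights_in_nonempty:
  fixes \<iota> :: "'v::euclidean_space \<Rightarrow> complex^'n^'n"
  assumes "linear \<iota>" "\<forall>u. hermitian (\<iota> u)" "abelian \<iota>"
    and "subspace K" "\<forall>u. \<forall>x\<in>K. \<iota> u *v x \<in> K" "K \<noteq> {0}"
  shows "weights_in \<iota> K \<noteq> {}"
proof -
  obtain \<phi> where "\<phi> \<in> K" "\<phi> \<noteq> 0"
    using assms(4,6) subspace_0 by blast
  then have "expectation \<iota> \<phi> /\<^sub>R (\<phi> \<bullet> \<phi>) \<in> convex hull (weights_in \<iota> K)"
    by (rule expectation_in_convex_hull_weights_in[OF assms(1-5)])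
  then show ?thesis
    by auto
qed

lemma expectation_in_convex_hull_hyperplane:
  fixes \<iota> :: "'v::euclidean_space \<Rightarrow> complex^'n^'n"
  assumes "linear \<iota>" "\<forall>u. hermitian (\<iota> u)" "abelian \<iota>"
    and "\<iota> w *v \<phi> = c *\<^sub>R \<phi>" "\<phi> \<noteq> 0"
  shows "expectation \<iota> \<phi> /\<^sub>R (\<phi> \<bullet> \<phi>) \<in> convex hull (weights \<iota> \<inter> {\<alpha>. \<alpha> \<bullet> w = c})"
proof -
  define K where "K = {x. \<iota> w *v x = c *\<^sub>R x}"
  have "weights_in \<iota> K \<subseteq> {\<alpha>. \<alpha> \<bullet> w = c}"
  proof
    fix \<alpha> assume "\<alpha> \<in> weights_in \<iota> K"
    then obtain \<psi> where "\<psi> \<noteq> 0" "\<iota> w *v \<psi> = c *\<^sub>R \<psi>"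
      and "\<iota> w *v \<psi> = complex_of_real (\<alpha> \<bullet> w) *s \<psi>"
      unfolding weights_in_def K_def by blast
    then show "\<alpha> \<in> {\<alpha>. \<alpha> \<bullet> w = c}"
      by (simp add: of_real_vector_mult_eq_scaleR)
  qed
  then have "convex hull (weights_in \<iota> K) \<subseteq> convex hull (weights \<iota> \<inter> {\<alpha>. \<alpha> \<bullet> w = c})"
    using weights_in_subset_weights by (intro hull_mono) blast
  moreover have "\<forall>u. \<forall>x\<in>K. \<iota> u *v x \<in> K"
    using abelian_eigenspace_invariant[OF assms(3)] unfolding K_def by blast
  then have "expectation \<iota> \<phi> /\<^sub>R (\<phi> \<bullet> \<phi>) \<in> convex hull (weights_in \<iota> K)"
    using assms(4,5) unfolding K_def
    by (intro expectation_in_convex_hull_weights_in[OF assms(1-3) subspace_eigenspace]) auto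
  ultimately show ?thesis
    by blast
qed

lemma weight_off_hyperplane:
  fixes \<iota> :: "'v::euclidean_space \<Rightarrow> complex^'n^'n"
  assumes "linear \<iota>" and herm: "\<forall>u. hermitian (\<iota> u)" and "abelian \<iota>"
    and not_scalar: "\<nexists>z. \<iota> w = mat z"
  shows "\<exists>\<beta>\<in>weights \<iota>. \<beta> \<bullet> w \<noteq> c"
proof -
  define K where "K = {x. \<iota> w *v x = c *\<^sub>R x}"
  have "subspace K"
    unfolding K_def by (rule subspace_eigenspace)
  have "K \<noteq> UNIV"
  proof
    assume "K = UNIV"
    then have "\<iota> w *v x = c *\<^sub>R x" for x
      unfolding K_def by blast
    then have "\<iota> w = mat (complex_of_real c)"
      by (simp add: matrix_eq matrix_vector_mult_mat of_real_vector_mult_eq_scaleR)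
    then show False
      using not_scalar by blast
  qed
  then have "K\<^sup>\<bottom> \<noteq> {0}"
    by (metis orthogonal_comp_null orthogonal_comp_self[OF \<open>subspace K\<close>])
  moreover have "\<forall>u. \<forall>x\<in>K\<^sup>\<bottom>. \<iota> u *v x \<in> K\<^sup>\<bottom>"
  proof (intro allI ballI)
    fix u x assume "x \<in> K\<^sup>\<bottom>"
    moreover have "\<forall>y\<in>K. \<iota> u *v y \<in> K"
      using abelian_eigenspace_invariant[OF assms(3)] unfolding K_def by blast
    ultimately show "\<iota> u *v x \<in> K\<^sup>\<bottom>"
      using hermitian_invariant_orthogonal_comp herm by blast
  qed
  ultimately obtain \<beta> where "\<beta> \<in> weights_in \<iota> (K\<^sup>\<bottom>)"
    using weights_in_nonempty[OF assms(1-3) subspace_orthogonal_comp] by blast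
  then obtain \<psi> where "\<psi> \<in> K\<^sup>\<bottom>" "\<psi> \<noteq> 0"
    and "\<iota> w *v \<psi> = complex_of_real (\<beta> \<bullet> w) *s \<psi>"
    unfolding weights_in_def by blast
  then have eigen: "\<iota> w *v \<psi> = (\<beta> \<bullet> w) *\<^sub>R \<psi>"
    by (simp add: of_real_vector_mult_eq_scaleR)
  have "\<beta> \<bullet> w \<noteq> c"
  proof
    assume "\<beta> \<bullet> w = c"
    then have "\<psi> \<in> K"
      using eigen unfolding K_def by simp
    then show False
      using \<open>\<psi> \<in> K\<^sup>\<bottom>\<close> \<open>\<psi> \<noteq> 0\<close> orthogonal_Int_0[OF \<open>subspace K\<close>] by blast
  qed
  moreover have "\<beta> \<in> weights \<iota>"
    using \<open>\<beta> \<in> weights_in \<iota> (K\<^sup>\<bottom>)\<close> weights_in_subset_weights by blast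
  ultimately show ?thesis
    by blast
qed

lemma pure_v_rep_by_convex_hull_hyperplane:
  fixes \<iota> :: "'v::euclidean_space \<Rightarrow> complex^'n^'n"
  assumes ft: "functional_theory \<iota> W" and ab: "abelian \<iota>"
    and rep: "pure_v_rep_by \<iota> W \<rho> v" "pure_v_rep_by \<iota> W \<rho> v'"
  shows "\<exists>c. \<rho> \<in> convex hull (weights \<iota> \<inter> {\<alpha>. \<alpha> \<bullet> (v' - v) = c})"
proof -
  have lin: "linear \<iota>" and herm: "\<forall>u. hermitian (\<iota> u)" and "hermitian W"
    using ft unfolding functional_theory_def by auto
  obtain \<psi> where \<psi>: "\<psi> \<in> Gp \<iota> W v" "dual_pure \<iota> \<psi> \<rho>"
    using rep(1) unfolding pure_v_rep_by_def by blast
  obtain \<psi>' where \<psi>': "\<psi>' \<in> Gp \<iota> W v'" "dual_pure \<iota> \<psi>' \<rho>"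
    using rep(2) unfolding pure_v_rep_by_def by blast
  have G: "\<psi> \<in> pure_ground_states (\<iota> v + W)" "\<psi>' \<in> pure_ground_states (\<iota> v' + W)"
    using \<psi>(1) \<psi>'(1) unfolding Gp_def by simp_all
  have \<rho>: "\<rho> = expectation \<iota> \<psi>" "\<rho> = expectation \<iota> \<psi>'"
    using dual_pure_eq_expectation[OF lin] \<psi>(2) \<psi>'(2) by blast+
  have H: "hermitian (\<iota> v + W)" "hermitian (\<iota> v' + W)"
    using herm \<open>hermitian W\<close> by (simp_all add: hermitian_add)
  have \<iota>_diff: "\<iota> (v' - v) = (\<iota> v' + W) - (\<iota> v + W)"
    by (simp add: linear_diff[OF lin])
  have "\<psi> \<bullet> (\<iota> (v' - v) *v \<psi>) = \<psi>' \<bullet> (\<iota> (v' - v) *v \<psi>')"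
    using \<rho> by (simp add: inner_expectation[OF lin, symmetric])
  then have "\<exists>c. \<iota> (v' - v) *v \<psi>' = c *\<^sub>R \<psi>'"
    unfolding \<iota>_diff by (rule common_ground_state_eigenvector[OF H G])
  then obtain c where eigen: "\<iota> (v' - v) *v \<psi>' = c *\<^sub>R \<psi>'"
    by blast
  have "\<psi>' \<bullet> \<psi>' = 1"
    using G(2) by (rule pure_ground_state_normalized)
  then have "\<psi>' \<noteq> 0"
    by auto
  then have "\<rho> \<in> convex hull (weights \<iota> \<inter> {\<alpha>. \<alpha> \<bullet> (v' - v) = c})"
    using expectation_in_convex_hull_hyperplane[OF lin herm ab eigen] \<rho>(2)
      \<open>\<psi>' \<bullet> \<psi>' = 1\<close> by simp
  then show ?thesis ..
qed

theorem corollary4p19: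
  fixes \<iota> :: "'v::euclidean_space \<Rightarrow> complex^'n^'n" and W :: "complex^'n^'n" and \<rho> :: 'v
  assumes "functional_theory \<iota> W"
    and "abelian \<iota>"
    and "\<rho> \<in> convex hull (weights \<iota>)"
    and "pure_v_representable \<iota> W \<rho>"
    and "\<forall>S. S \<subseteq> weights \<iota> \<and> int (card S) = aff_dim (convex hull (weights \<iota>))
           \<longrightarrow> \<rho> \<notin> convex hull S"
  shows "uniquely_v_representable \<iota> W \<rho>"
proof -
  have lin: "linear \<iota>" and herm: "\<forall>u. hermitian (\<iota> u)"
    using assms(1) unfolding functional_theory_def by auto
  obtain v where rep_v: "pure_v_rep_by \<iota> W \<rho> v"
    using assms(4) unfolding pure_v_representable_def by blast
  have "\<exists>z. \<iota> v' - \<iota> v = mat z" if rep_v': "pure_v_rep_by \<iota> W \<rho> v'" for v'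
  proof (rule ccontr)
    assume "\<nexists>z. \<iota> v' - \<iota> v = mat z"
    then have not_scalar: "\<nexists>z. \<iota> (v' - v) = mat z"
      by (simp add: linear_diff[OF lin])
    obtain c where \<rho>_hull: "\<rho> \<in> convex hull (weights \<iota> \<inter> {\<alpha>. \<alpha> \<bullet> (v' - v) = c})"
      using pure_v_rep_by_convex_hull_hyperplane[OF assms(1,2) rep_v rep_v'] by blast
    obtain \<beta> where "\<beta> \<in> weights \<iota>" "\<beta> \<bullet> (v' - v) \<noteq> c"
      using weight_off_hyperplane[OF lin herm assms(2) not_scalar] by blast
    then have "aff_dim (weights \<iota> \<inter> {\<alpha>. \<alpha> \<bullet> (v' - v) = c}) < aff_dim (weights \<iota>)"
      by (rule aff_dim_hyperplane_section_less)
    then have "\<exists>S\<subseteq>weights \<iota>. int (card S) = aff_dim (weights \<iota>) \<and> \<rho> \<in> convex hull S"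
      by (rule caratheodory_lower_aff_dim[OF \<rho>_hull Int_lower1])
    then show False
      using assms(5) by (auto simp: aff_dim_convex_hull)
  qed
  then show ?thesis
    unfolding uniquely_v_representable_def using rep_v by blast
qed

end
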